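(* There is no continuous map $F\colon \overline{\Delta}\to \overline{\Delta}^2$ which is holomorphic on $\Delta$ and satisfies $F(b\Delta) = b(\Delta^2)$.
   Context: $\Delta=\{z\in\mathbb{C}: |z|<1\}$ is the open unit disc, $\overline{\Delta}$ its closure, $b\Delta$ its boundary (the unit circle), $\Delta^2=\Delta\times\Delta\subset\mathbb{C}^2$ the bidisc and $b(\Delta^2)$ its topological boundary in $\mathbb{C}^2$. *)

theory Defs
  imports "HOL-Complex_Analysis.Complex_Analysis"
begin

end

theory Submission
  imports Defs
begin

text \<open>
  Write \<open>F = (f, g)\<close>. Every point \<open>(a, -1)\<close> with \<open>|a| \<le> 1/2\<close> lies in \<open>b(\<Delta>\<^sup>2)\<close>, so the
  closed set of \<open>\<zeta> \<in> b\<Delta>\<close> with \<open>g \<zeta> = -1\<close> and \<open>|f \<zeta>| \<le> 1/2\<close> is uncountable and hence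
  contains one of its accumulation points \<open>\<zeta>\<^sub>0\<close>. Near \<open>\<zeta>\<^sub>0\<close> we have \<open>|f| < 1\<close> on \<open>b\<Delta>\<close>,
  so \<open>|g| = 1\<close> there, since \<open>F\<close> maps \<open>b\<Delta>\<close> into \<open>b(\<Delta>\<^sup>2)\<close>. After a Cayley transform
  sending the upper half-plane to \<open>\<Delta>\<close> and \<open>0\<close> to \<open>\<zeta>\<^sub>0\<close>, followed by a M\<ouml>bius map sending
  \<open>b\<Delta>\<close> to the real line and \<open>-1\<close> to \<open>0\<close>, \<open>g\<close> becomes a function that is real on a
  real interval around \<open>0\<close> and has zeros accumulating at \<open>0\<close>; Schwarz reflection and the
  identity theorem force \<open>g \<equiv> -1\<close>. This contradicts \<open>(0, 1) \<in> F(b\<Delta>)\<close>.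
\<close>

definition cayley :: "complex \<Rightarrow> complex \<Rightarrow> complex"
  where "cayley v z = v * (z - \<i>) / (z + \<i>)"

definition cayley_inv :: "complex \<Rightarrow> complex \<Rightarrow> complex"
  where "cayley_inv v w = \<i> * (v + w) / (v - w)"

lemma norm_diff_i_less_norm_add_i_iff: "norm (z - \<i>) < norm (z + \<i>) \<longleftrightarrow> 0 < Im z"
  by (simp add: cmod_def power2_eq_square algebra_simps)

lemma norm_diff_i_le_norm_add_i_iff: "norm (z - \<i>) \<le> norm (z + \<i>) \<longleftrightarrow> 0 \<le> Im z"
  by (simp add: cmod_def power2_eq_square algebra_simps)

lemma norm_cayley: "norm v = 1 \<Longrightarrow> norm (cayley v z) = norm (z - \<i>) / norm (z + \<i>)"
  by (simp add: cayley_def norm_mult norm_divide)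

lemma norm_cayley_less_1_iff:
  assumes "norm v = 1" "z \<noteq> - \<i>"
  shows "norm (cayley v z) < 1 \<longleftrightarrow> 0 < Im z"
proof -
  have "norm (z + \<i>) > 0" using assms(2) by (simp add: add_eq_0_iff2)
  then show ?thesis
    using assms(1) by (simp add: norm_cayley divide_less_eq norm_diff_i_less_norm_add_i_iff)
qed

lemma norm_cayley_le_1_iff:
  assumes "norm v = 1" "z \<noteq> - \<i>"
  shows "norm (cayley v z) \<le> 1 \<longleftrightarrow> 0 \<le> Im z"
proof -
  have "norm (z + \<i>) > 0" using assms(2) by (simp add: add_eq_0_iff2)
  then show ?thesis
    using assms(1) by (simp add: norm_cayley divide_le_eq norm_diff_i_le_norm_add_i_iff)
qed

lemma norm_cayley_of_real:
  assumes "norm v = 1" "x \<in> \<real>"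
  shows "norm (cayley v x) = 1"
proof -
  have "norm (x - \<i>) = norm (x + \<i>)" "x \<noteq> - \<i>"
    using \<open>x \<in> \<real>\<close> by (auto simp: cmod_def complex_is_Real_iff complex_eq_iff)
  then show ?thesis using \<open>norm v = 1\<close> by (simp add: norm_cayley add_eq_0_iff2)
qed

lemma cayley_0: "cayley v 0 = - v"
  by (simp add: cayley_def field_simps)

lemma cayley_cayley_inv:
  assumes "v \<noteq> 0" "w \<noteq> v"
  shows "cayley v (cayley_inv v w) = w"
proof -
  have "v - w \<noteq> 0" using assms by simp
  then show ?thesis using assms(1)
    by (simp add: cayley_def cayley_inv_def divide_simps) (simp add: algebra_simps)
qed

lemma cayley_inv_neq_minus_i:
  assumes "v \<noteq> 0" "w \<noteq> v"
  shows "cayley_inv v w \<noteq> - \<i>"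
proof -
  have "v - w \<noteq> 0" using assms by simp
  then show ?thesis using assms(1)
    by (simp add: cayley_inv_def divide_simps) (simp add: algebra_simps)
qed

lemma cayley_inv_eq_0_iff: "cayley_inv v w = 0 \<longleftrightarrow> w = - v \<or> w = v"
  by (auto simp: cayley_inv_def add_eq_0_iff2)

lemma cayley_inv_in_Reals:
  assumes "norm v = 1" "norm w = 1"
  shows "cayley_inv v w \<in> \<real>"
proof (cases "v = w")
  case False
  have "v * cnj v = 1" "w * cnj w = 1"
    using assms by (simp_all add: complex_norm_square[symmetric])
  then have "cnj v = 1 / v" "cnj w = 1 / w"
    by (auto simp: eq_divide_eq mult.commute)
  then have "cnj (cayley_inv v w) = cayley_inv v w"
    using False assms by (auto simp: cayley_inv_def field_simps)
  then show ?thesis using Reals_cnj_iff by blast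
qed (simp add: cayley_inv_def)

lemma upper_half_ball_eq_0_if_real_zeros_accumulate:
  assumes hol: "h holomorphic_on (ball 0 r \<inter> {z. 0 < Im z})"
    and cont: "continuous_on (ball 0 r \<inter> {z. 0 \<le> Im z}) h"
    and real: "\<And>x. x \<in> ball 0 r \<Longrightarrow> x \<in> \<real> \<Longrightarrow> h x \<in> \<real>"
    and zeros: "0 islimpt {x \<in> ball 0 r \<inter> \<real>. h x = 0}"
    and z: "z \<in> ball 0 r" "0 \<le> Im z"
  shows "h z = 0"
proof -
  define h' where "h' = (\<lambda>z. if 0 \<le> Im z then h z else cnj (h (cnj z)))"
  have hol': "h' holomorphic_on ball 0 r"
    unfolding h'_def by (rule Schwarz_reflection[OF _ _ hol cont real]) auto
  have centre: "0 \<in> ball (0::complex) r"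
  proof -
    obtain x where "x \<in> ball (0::complex) r"
      using zeros unfolding islimpt_approachable
      by (metis (no_types, lifting) IntD1 mem_Collect_eq zero_less_one)
    then show ?thesis by (simp add: le_less_trans[OF norm_ge_zero])
  qed
  have "h' z = 0"
  proof (rule analytic_continuation[OF hol' _ _ _ centre zeros])
    show "{x \<in> ball 0 r \<inter> \<real>. h x = 0} \<subseteq> ball 0 r" by blast
    show "\<And>x. x \<in> {x \<in> ball 0 r \<inter> \<real>. h x = 0} \<Longrightarrow> h' x = 0"
      by (simp add: h'_def complex_is_Real_iff)
  qed (use z in auto)
  then show ?thesis using z by (simp add: h'_def)
qed

lemma upper_half_plane_eq_minus_1_if_unimodular_on_real_line:
  fixes G :: "complex \<Rightarrow> complex"
  assumes cont: "continuous_on {z. 0 \<le> Im z} G"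
    and hol: "G holomorphic_on {z. 0 < Im z}"
    and "0 < \<epsilon>" and unimodular: "\<And>x. x \<in> \<real> \<Longrightarrow> norm x < \<epsilon> \<Longrightarrow> norm (G x) = 1"
    and "G 0 = -1"
    and zeros: "0 islimpt {x \<in> \<real>. G x = -1}"
    and "0 < Im z"
  shows "G z = -1"
proof -
  obtain d where "0 < d" and d: "\<And>z. 0 \<le> Im z \<Longrightarrow> dist z 0 < d \<Longrightarrow> dist (G z) (-1) < 1"
    using cont \<open>G 0 = -1\<close> unfolding continuous_on_iff
    by (metis mem_Collect_eq order_refl zero_complex.sel(2) zero_less_one)
  define r where "r = min d \<epsilon>"
  have "0 < r" using \<open>0 < d\<close> \<open>0 < \<epsilon>\<close> by (simp add: r_def)
  have G_neq_1: "G z \<noteq> 1" if "z \<in> ball 0 r" "0 \<le> Im z" for z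
    using d[OF that(2)] that(1) by (auto simp: r_def dist_norm)
  \<comment> \<open>\<open>cayley_inv 1\<close> maps \<open>b\<Delta>\<close> into the real line and \<open>-1\<close> to \<open>0\<close>.\<close>
  define h where "h = (\<lambda>z. cayley_inv 1 (G z))"
  have cayley_inv_hol: "cayley_inv 1 holomorphic_on {w. w \<noteq> 1}"
    unfolding cayley_inv_def by (intro holomorphic_intros) auto
  have h_eq_0: "h z = 0" if "z \<in> ball 0 r" "0 \<le> Im z" for z
  proof (rule upper_half_ball_eq_0_if_real_zeros_accumulate[OF _ _ _ _ that])
    have "G holomorphic_on ball 0 r \<inter> {z. 0 < Im z}"
      by (rule holomorphic_on_subset[OF hol]) auto
    then have "(cayley_inv 1 \<circ> G) holomorphic_on ball 0 r \<inter> {z. 0 < Im z}"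
      by (rule holomorphic_on_compose_gen[OF _ cayley_inv_hol]) (use G_neq_1 in auto)
    then show "h holomorphic_on ball 0 r \<inter> {z. 0 < Im z}"
      by (simp add: h_def o_def)
    show "continuous_on (ball 0 r \<inter> {z. 0 \<le> Im z}) h"
      unfolding h_def using G_neq_1
      by (intro continuous_on_compose2[OF holomorphic_on_imp_continuous_on[OF cayley_inv_hol]]
          continuous_on_subset[OF cont]) auto
    show "h x \<in> \<real>" if "x \<in> ball 0 r" "x \<in> \<real>" for x
      unfolding h_def using that unimodular by (intro cayley_inv_in_Reals) (auto simp: r_def)
    have "{x \<in> \<real>. G x = -1} \<inter> ball 0 r \<subseteq> {x \<in> ball 0 r \<inter> \<real>. h x = 0}"
      by (auto simp: h_def cayley_inv_def)
    moreover have "0 islimpt {x \<in> \<real>. G x = -1} \<inter> ball 0 r"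
      using \<open>0 < r\<close> by (intro islimpt_Int_eventually[OF zeros] eventually_at_in_open') auto
    ultimately show "0 islimpt {x \<in> ball 0 r \<inter> \<real>. h x = 0}"
      by (rule islimpt_subset[rotated])
  qed
  show "G z = -1"
  proof (rule analytic_continuation_open[where s = "ball 0 r \<inter> {z. 0 < Im z}"
        and s' = "{z. 0 < Im z}" and f = G and g = "\<lambda>_. -1"])
    have "\<i> * of_real (r / 2) \<in> ball 0 r \<inter> {z. 0 < Im z}"
      using \<open>0 < r\<close> by (simp add: norm_mult)
    then show "ball 0 r \<inter> {z. 0 < Im z} \<noteq> {}" by blast
    show "G z = -1" if "z \<in> ball 0 r \<inter> {z. 0 < Im z}" for z
      using h_eq_0[of z] G_neq_1[of z] that by (auto simp: h_def cayley_inv_eq_0_iff)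
  qed (use hol \<open>0 < Im z\<close> in
        \<open>auto intro: open_halfspace_Im_gt convex_connected convex_halfspace_Im_gt\<close>)
qed

lemma cball_eq_minus_1_if_unimodular_near_boundary_point:
  fixes g :: "complex \<Rightarrow> complex"
  assumes cont: "continuous_on (cball 0 1) g" and hol: "g holomorphic_on ball 0 1"
    and "0 < \<epsilon>" and unimodular: "\<And>\<zeta>. \<zeta> \<in> sphere 0 1 \<Longrightarrow> dist \<zeta> \<zeta>0 < \<epsilon> \<Longrightarrow> norm (g \<zeta>) = 1"
    and zeros: "\<zeta>0 islimpt {\<zeta> \<in> sphere 0 1. g \<zeta> = -1}"
    and "w \<in> cball 0 1"
  shows "g w = -1"
proof -
  define A where "A = {\<zeta> \<in> sphere 0 1. g \<zeta> = -1}"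
  have "closed A"
    unfolding A_def using continuous_on_subset[OF cont sphere_cball]
    by (rule continuous_closed_preimage_constant) simp
  then have "\<zeta>0 \<in> A" using zeros closed_limpt by (auto simp: A_def)
  then have "norm \<zeta>0 = 1" "g \<zeta>0 = -1" by (auto simp: A_def)
  define v where "v = - \<zeta>0"
  have "norm v = 1" "v \<noteq> 0" "\<zeta>0 \<noteq> v"
    using \<open>norm \<zeta>0 = 1\<close> by (auto simp: v_def)
  define G where "G = (\<lambda>z. g (cayley v z))"
  have cayley_cont: "continuous_on {z. z \<noteq> - \<i>} (cayley v)"
    unfolding cayley_def by (intro continuous_intros) (auto simp: add_eq_0_iff2)
  have "isCont (cayley v) 0"
    unfolding cayley_def by (intro continuous_intros) auto
  then obtain \<delta> where "0 < \<delta>" and \<delta>: "\<And>x. dist x 0 < \<delta> \<Longrightarrow> dist (cayley v x) \<zeta>0 < \<epsilon>"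
    using \<open>0 < \<epsilon>\<close> unfolding continuous_at_eps_delta cayley_0 v_def by auto
  have G_upper_half_plane: "G z = -1" if "0 < Im z" for z
  proof (rule upper_half_plane_eq_minus_1_if_unimodular_on_real_line[where G = G, OF _ _ \<open>0 < \<delta>\<close>])
    have "cayley v ` {z. 0 \<le> Im z} \<subseteq> cball 0 1"
      using norm_cayley_le_1_iff[OF \<open>norm v = 1\<close>] by force
    then show "continuous_on {z. 0 \<le> Im z} G"
      unfolding G_def
      by (intro continuous_on_compose2[OF cont continuous_on_subset[OF cayley_cont]]) auto
    have "cayley v holomorphic_on {z. 0 < Im z}"
      unfolding cayley_def by (intro holomorphic_intros) (auto simp: add_eq_0_iff2)
    then have "(g \<circ> cayley v) holomorphic_on {z. 0 < Im z}"
      by (rule holomorphic_on_compose_gen[OF _ hol])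
         (use norm_cayley_less_1_iff[OF \<open>norm v = 1\<close>] in force)
    then show "G holomorphic_on {z. 0 < Im z}" by (simp add: G_def o_def)
    show "norm (G x) = 1" if "x \<in> \<real>" "norm x < \<delta>" for x
      unfolding G_def using that \<delta>[of x] norm_cayley_of_real[OF \<open>norm v = 1\<close>]
      by (intro unimodular) auto
    show "G 0 = -1" using \<open>g \<zeta>0 = -1\<close> by (simp add: G_def cayley_0 v_def)
    show "0 islimpt {x \<in> \<real>. G x = -1}"
    proof -
      have "\<zeta>0 islimpt insert v (A - {v})"
        using zeros by (rule islimpt_subset) (auto simp: A_def)
      then have "\<zeta>0 islimpt A - {v}"
        by (simp only: islimpt_insert)
      moreover have "isCont (cayley_inv v) \<zeta>0"
        using \<open>\<zeta>0 \<noteq> v\<close> unfolding cayley_inv_def by (intro continuous_intros) auto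
      moreover have "eventually (\<lambda>y. cayley_inv v y \<noteq> cayley_inv v \<zeta>0) (at \<zeta>0)"
      proof -
        have "eventually (\<lambda>y. y \<in> - {v} - {\<zeta>0}) (at \<zeta>0)"
          using \<open>\<zeta>0 \<noteq> v\<close> by (intro eventually_at_in_open) (auto simp: open_Compl)
        then have "eventually (\<lambda>y. cayley_inv v y \<noteq> 0) (at \<zeta>0)"
          by (auto elim!: eventually_mono simp: cayley_inv_eq_0_iff v_def)
        then show ?thesis by (simp add: cayley_inv_def v_def)
      qed
      ultimately have "cayley_inv v \<zeta>0 islimpt cayley_inv v ` (A - {v})"
        by (rule islimpt_isCont_image)
      moreover have "cayley_inv v ` (A - {v}) \<subseteq> {x \<in> \<real>. G x = -1}"
        using \<open>norm v = 1\<close> \<open>v \<noteq> 0\<close>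
        by (auto simp: A_def G_def cayley_inv_in_Reals cayley_cayley_inv)
      ultimately show ?thesis
        by (simp add: islimpt_subset cayley_inv_def v_def)
    qed
  qed (fact that)
  have "g w = -1" if "w \<in> ball 0 1" for w
  proof -
    have "w \<noteq> v" using that \<open>norm v = 1\<close> by auto
    then have "cayley_inv v w \<noteq> - \<i>" and w_eq: "cayley v (cayley_inv v w) = w"
      using \<open>v \<noteq> 0\<close> by (simp_all add: cayley_inv_neq_minus_i cayley_cayley_inv)
    then have "0 < Im (cayley_inv v w)"
      using that norm_cayley_less_1_iff[OF \<open>norm v = 1\<close>, of "cayley_inv v w"] by simp
    then show ?thesis using G_upper_half_plane[of "cayley_inv v w"] by (simp add: G_def w_eq)
  qed
  then show ?thesis
    using continuous_constant_on_closure[of "ball 0 1" g "-1" w] cont \<open>w \<in> cball 0 1\<close> by simp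
qed

lemma mem_frontier_bidisc:
  "p \<in> frontier (ball 0 1 \<times> ball (0::complex) 1) \<longleftrightarrow>
     norm (fst p) \<le> 1 \<and> norm (snd p) \<le> 1 \<and> (norm (fst p) = 1 \<or> norm (snd p) = 1)"
  by (cases p) (auto simp: frontier_def closure_Times interior_open open_Times)

lemma limpt_of_fibre_if_uncountable_image:
  fixes F :: "'a::{real_normed_vector, heine_borel} \<Rightarrow> 'b::topological_space \<times> 'c::t1_space"
  assumes "continuous_on S F" "closed S" "closed C" "uncountable C" "C \<times> {b} \<subseteq> F ` S"
  obtains z where "z \<in> S" "fst (F z) \<in> C" "z islimpt {z \<in> S. snd (F z) = b}"
proof -
  define Z where "Z = S \<inter> F -` (C \<times> {b})"
  have "closed Z"
    unfolding Z_def using assms(1-3) by (intro continuous_closed_preimage closed_Times) auto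
  have "C \<subseteq> fst ` F ` Z"
  proof
    fix c assume "c \<in> C"
    then obtain z where "z \<in> S" "F z = (c, b)"
      using assms(5) by (metis SigmaI imageE singletonI subsetD)
    then show "c \<in> fst ` F ` Z"
      using \<open>c \<in> C\<close> by (metis IntI Z_def fst_conv image_eqI mem_Sigma_iff singletonI vimageI)
  qed
  then have "uncountable Z"
    using assms(4) countable_subset by force
  then obtain z where "z \<in> Z" "z islimpt Z"
    using \<open>closed Z\<close> no_limpt_imp_countable closed_limpt by blast
  moreover have "Z \<subseteq> {z \<in> S. snd (F z) = b}"
    by (auto simp: Z_def)
  ultimately show thesis
    using that by (auto simp: Z_def mem_Times_iff intro: islimpt_subset)
qed

lemma sphere_image_neq_frontier_bidisc:
  fixes F :: "complex \<Rightarrow> complex \<times> complex"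
  assumes cont: "continuous_on (cball 0 1) F" and hol: "(snd \<circ> F) holomorphic_on ball 0 1"
  shows "F ` sphere 0 1 \<noteq> frontier (ball 0 1 \<times> ball 0 1)"
proof
  assume F_sphere: "F ` sphere 0 1 = frontier (ball 0 1 \<times> ball 0 1)"
  have "uncountable (cball (0::complex) (1/2))"
    by (simp add: uncountable_cball)
  moreover have "cball 0 (1/2) \<times> {-1} \<subseteq> F ` sphere 0 1"
    unfolding F_sphere by (auto simp: mem_frontier_bidisc)
  ultimately obtain \<zeta>0 where "\<zeta>0 \<in> sphere 0 1" "fst (F \<zeta>0) \<in> cball 0 (1/2)"
    and limpt: "\<zeta>0 islimpt {\<zeta> \<in> sphere 0 1. snd (F \<zeta>) = -1}"
    by (rule limpt_of_fibre_if_uncountable_image[OF continuous_on_subset[OF cont sphere_cball]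
          closed_sphere closed_cball])
  then obtain \<epsilon> where "0 < \<epsilon>"
    and \<epsilon>: "\<And>\<zeta>. \<zeta> \<in> cball 0 1 \<Longrightarrow> dist \<zeta> \<zeta>0 < \<epsilon> \<Longrightarrow> dist (fst (F \<zeta>)) (fst (F \<zeta>0)) < 1/2"
    using continuous_on_fst[OF cont] unfolding continuous_on_iff
    by (metis half_gt_zero sphere_cball subsetD zero_less_one)
  have snd_F_eq: "(snd \<circ> F) \<zeta> = -1" if "\<zeta> \<in> cball 0 1" for \<zeta>
  proof (rule cball_eq_minus_1_if_unimodular_near_boundary_point[OF _ hol \<open>0 < \<epsilon>\<close> _ _ that])
    show "continuous_on (cball 0 1) (snd \<circ> F)"
      using continuous_on_snd[OF cont] by (simp add: o_def)
    show "norm ((snd \<circ> F) \<zeta>) = 1" if "\<zeta> \<in> sphere 0 1" "dist \<zeta> \<zeta>0 < \<epsilon>" for \<zeta>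
    proof -
      have "norm (fst (F \<zeta>)) < 1"
        using \<epsilon>[of \<zeta>] that \<open>fst (F \<zeta>0) \<in> cball 0 (1/2)\<close>
          norm_triangle_sub[of "fst (F \<zeta>)" "fst (F \<zeta>0)"]
        by (simp add: dist_norm)
      moreover have "F \<zeta> \<in> frontier (ball 0 1 \<times> ball 0 1)"
        using imageI[OF that(1), of F] unfolding F_sphere .
      ultimately show ?thesis
        by (simp add: mem_frontier_bidisc)
    qed
  qed (use limpt in \<open>simp add: o_def\<close>)
  have "(0, 1) \<in> F ` sphere 0 1"
    unfolding F_sphere by (simp add: mem_frontier_bidisc)
  then obtain \<zeta> where "\<zeta> \<in> sphere 0 1" "F \<zeta> = (0, 1)"
    by (metis imageE)
  with snd_F_eq[of \<zeta>] show False
    by simp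
qed

theorem proposition2:
  "\<not> (\<exists>F :: complex \<Rightarrow> complex \<times> complex.
      continuous_on (cball 0 1) F \<and>
      F ` cball 0 1 \<subseteq> cball 0 1 \<times> cball 0 1 \<and>
      (fst \<circ> F) holomorphic_on ball 0 1 \<and>
      (snd \<circ> F) holomorphic_on ball 0 1 \<and>
      F ` sphere 0 1 = frontier (ball 0 1 \<times> ball 0 1))"
  using sphere_image_neq_frontier_bidisc by blast

end
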